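(* Let $S=\{132,231,321\}$, and let $t_n$ and $f_n$ be the numbers of rooted labeled trees and forests on $[n]$ avoiding $S$, with exponential generating functions $T(x)=\sum_{n\ge0}\frac{t_n}{n!}x^n$ and $F(x)=\sum_{n\ge0}\frac{f_n}{n!}x^n$. Then $t_n=n!$ for all $n\ge1$, $T(x)=\frac{x}{1-x}$, $F(x)=e^{x/(1-x)}$, and $\lim_{n\to\infty}\frac{f_n^{1/n}}{n}=e^{-1}$.
   Context: A rooted labeled forest on $[n]$ is an unordered forest on $n$ vertices, each component with a distinguished root, with distinct labels from $[n]$; a rooted labeled tree is a connected one. An instance of a pattern (permutation) $\pi$ of $[k]$ is a sequence of vertices $v_1,\dots,v_k$ with $v_i$ a strict ancestor of $v_{i+1}$ whose labels are in the same relative order as $\pi$; a forest avoids $S$ if it contains no instance of any pattern in $S$. *)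

theory Defs
  imports Complex_Main "HOL-Computational_Algebra.Formal_Power_Series"
begin

text \<open>A rooted labeled forest on [n] = {1..n} is encoded by its parent function
  p :: nat => nat: for a vertex v in {1..n}, p v = 0 means v is a root, otherwise
  p v in {1..n} is the parent of v.\<close>

definition parent_edges :: "nat \<Rightarrow> (nat \<Rightarrow> nat) \<Rightarrow> (nat \<times> nat) set" where
  "parent_edges n p = {(v, p v) | v. v \<in> {1..n} \<and> p v \<noteq> 0}"

definition rooted_forest :: "nat \<Rightarrow> (nat \<Rightarrow> nat) \<Rightarrow> bool" where
  "rooted_forest n p \<longleftrightarrow>
     (\<forall>v. v \<notin> {1..n} \<longrightarrow> p v = 0) \<and>
     (\<forall>v\<in>{1..n}. p v \<le> n) \<and>
     (\<forall>v\<in>{1..n}. (v, v) \<notin> (parent_edges n p)\<^sup>+)"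

definition roots :: "nat \<Rightarrow> (nat \<Rightarrow> nat) \<Rightarrow> nat set" where
  "roots n p = {v \<in> {1..n}. p v = 0}"

definition rooted_tree :: "nat \<Rightarrow> (nat \<Rightarrow> nat) \<Rightarrow> bool" where
  "rooted_tree n p \<longleftrightarrow> rooted_forest n p \<and> card (roots n p) = 1"

definition strict_anc :: "nat \<Rightarrow> (nat \<Rightarrow> nat) \<Rightarrow> nat \<Rightarrow> nat \<Rightarrow> bool" where
  "strict_anc n p a v \<longleftrightarrow> (v, a) \<in> (parent_edges n p)\<^sup>+"

text \<open>Patterns are permutations in one-line notation, as lists.\<close>
definition has_instance :: "nat \<Rightarrow> (nat \<Rightarrow> nat) \<Rightarrow> nat list \<Rightarrow> bool" where
  "has_instance n p pat \<longleftrightarrow>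
     (\<exists>vs. length vs = length pat \<and> set vs \<subseteq> {1..n} \<and>
        (\<forall>i. Suc i < length vs \<longrightarrow> strict_anc n p (vs ! i) (vs ! Suc i)) \<and>
        (\<forall>i<length vs. \<forall>j<length vs. vs ! i < vs ! j \<longleftrightarrow> pat ! i < pat ! j))"

definition avoids :: "nat \<Rightarrow> (nat \<Rightarrow> nat) \<Rightarrow> nat list set \<Rightarrow> bool" where
  "avoids n p S \<longleftrightarrow> (\<forall>pat\<in>S. \<not> has_instance n p pat)"

definition num_trees :: "nat list set \<Rightarrow> nat \<Rightarrow> nat" where
  "num_trees S n = card {p. rooted_tree n p \<and> avoids n p S}"

definition num_forests :: "nat list set \<Rightarrow> nat \<Rightarrow> nat" where
  "num_forests S n = card {p. rooted_forest n p \<and> avoids n p S}"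

end

(*
  The patterns 132, 231, 321 are exactly the patterns of length 3 whose last entry is
  smaller than the middle one. Hence a forest avoids them iff every vertex whose parent
  is not a root is larger than its parent, i.e. deleting the roots leaves an increasing
  forest. For a fixed set of k roots, such a forest is built by choosing, for the
  non-roots in increasing order, a parent among the k roots and the smaller non-roots:
  k (k + 1) ... (n - 1) choices. So f_n = sum_k (n choose k) k^(n-k) (rising factorial)
  and t_n = n!. As [x^n] (x/(1-x))^k = k^(n-k) / (n-k)!, this is the exponential
  generating function exp(x/(1-x)). Finally n! <= f_n <= (n+1) n! e^(2 sqrt n), and the
  elementary bounds (n/e)^n <= n! <= e n (n/e)^n give root n f_n / n --> 1/e.
*)

theory Submission
  imports Defs "HOL-Library.FuncSet" "HOL-Real_Asymp.Real_Asymp"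
begin

section \<open>Avoidance as a local condition on parents\<close>

abbreviation pats_132_231_321 :: "nat list set" where
  "pats_132_231_321 \<equiv> {[1,3,2], [2,3,1], [3,2,1]}"

lemma parent_edges_iff:
  "(a, b) \<in> parent_edges n p \<longleftrightarrow> a \<in> {1..n} \<and> p a \<noteq> 0 \<and> b = p a"
  unfolding parent_edges_def by auto

lemma rooted_forest_parent_in:
  assumes "rooted_forest n p" "v \<in> {1..n}" "p v \<noteq> 0"
  shows "p v \<in> {1..n}"
  using assms unfolding rooted_forest_def by auto

lemma rooted_forest_trancl_neq:
  assumes "rooted_forest n p" "(u, w) \<in> (parent_edges n p)\<^sup>+"
  shows "u \<noteq> w"
  using assms tranclD[OF assms(2)] unfolding rooted_forest_def by (auto simp: parent_edges_iff)

lemma parent_edges_trancl_nonroot: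
  "(a, b) \<in> (parent_edges n p)\<^sup>+ \<Longrightarrow> p a \<noteq> 0"
  by (erule converse_tranclE) (auto simp: parent_edges_iff)

definition increasing_below_roots :: "nat \<Rightarrow> (nat \<Rightarrow> nat) \<Rightarrow> bool" where
  "increasing_below_roots n p \<longleftrightarrow> (\<forall>v\<in>{1..n}. p v \<noteq> 0 \<and> p (p v) \<noteq> 0 \<longrightarrow> p v < v)"

lemma increasing_below_roots_descendant_less:
  assumes "increasing_below_roots n p" "(c, b) \<in> (parent_edges n p)\<^sup>+" "p b \<noteq> 0"
  shows "b < c"
  using assms(2,3)
proof (induction rule: trancl_induct)
  case (base b)
  then show ?case
    using assms(1) by (auto simp: parent_edges_iff increasing_below_roots_def)
next
  case (step a b)
  then have "a \<in> {1..n}" "p a \<noteq> 0" "b = p a"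
    by (auto simp: parent_edges_iff)
  then show ?case
    using step.IH step.prems assms(1) by (auto simp: increasing_below_roots_def)
qed

lemma increasing_below_roots_imp_avoids:
  assumes "increasing_below_roots n p"
  shows "avoids n p pats_132_231_321"
  unfolding avoids_def
proof (intro ballI notI)
  fix pat assume pat: "pat \<in> pats_132_231_321" and "has_instance n p pat"
  then obtain vs where vs: "length vs = length pat"
    "\<forall>i. Suc i < length vs \<longrightarrow> strict_anc n p (vs ! i) (vs ! Suc i)"
    "\<forall>i<length vs. \<forall>j<length vs. vs ! i < vs ! j \<longleftrightarrow> pat ! i < pat ! j"
    unfolding has_instance_def by blast
  have "length vs = 3"
    using vs(1) pat by auto
  have "(vs ! 1, vs ! 0) \<in> (parent_edges n p)\<^sup>+"
    using vs(2)[rule_format, of 0] \<open>length vs = 3\<close> by (simp add: strict_anc_def)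
  moreover have "(vs ! 2, vs ! 1) \<in> (parent_edges n p)\<^sup>+"
    using vs(2)[rule_format, of 1] \<open>length vs = 3\<close> by (simp add: strict_anc_def numeral_2_eq_2)
  ultimately have "vs ! 1 < vs ! 2"
    by (intro increasing_below_roots_descendant_less[OF assms] parent_edges_trancl_nonroot)
  then have "pat ! 1 < pat ! 2"
    using vs(3)[rule_format, of 1 2] \<open>length vs = 3\<close> by simp
  then show False
    using pat by auto
qed

lemma chain_has_instance_3:
  assumes "{a, b, c} \<subseteq> {1..n}" "strict_anc n p a b" "strict_anc n p b c"
    "a < b \<longleftrightarrow> x < y" "b < a \<longleftrightarrow> y < x" "a < c \<longleftrightarrow> x < z"
    "c < a \<longleftrightarrow> z < x" "b < c \<longleftrightarrow> y < z" "c < b \<longleftrightarrow> z < y"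
  shows "has_instance n p [x, y, z]"
  unfolding has_instance_def
proof (intro exI[of _ "[a, b, c]"] conjI allI impI)
  fix i assume "Suc i < length [a, b, c]"
  then consider "i = 0" | "i = 1"
    by fastforce
  then show "strict_anc n p ([a, b, c] ! i) ([a, b, c] ! Suc i)"
    by cases (use assms(2,3) in auto)
next
  fix i j assume "i < length [a, b, c]" "j < length [a, b, c]"
  then have "i \<in> {0, 1, 2}" "j \<in> {0, 1, 2}"
    by auto
  then show "[a, b, c] ! i < [a, b, c] ! j \<longleftrightarrow> [x, y, z] ! i < [x, y, z] ! j"
    by (elim insertE emptyE) (simp_all add: assms(4-9))
qed (use assms(1) in auto)

lemma avoids_imp_increasing_below_roots:
  assumes "rooted_forest n p" "avoids n p pats_132_231_321"
  shows "increasing_below_roots n p"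
  unfolding increasing_below_roots_def
proof (intro ballI impI)
  fix v assume v: "v \<in> {1..n}" and parents: "p v \<noteq> 0 \<and> p (p v) \<noteq> 0"
  define b where "b = p v"
  define a where "a = p b"
  have "b \<in> {1..n}" "a \<in> {1..n}"
    using rooted_forest_parent_in[OF assms(1)] v parents unfolding a_def b_def by blast+
  then have edges: "(v, b) \<in> parent_edges n p" "(b, a) \<in> parent_edges n p"
    using v parents by (auto simp: parent_edges_iff a_def b_def)
  then have chain: "strict_anc n p a b" "strict_anc n p b v"
    by (simp_all add: strict_anc_def r_into_trancl')
  have "(v, a) \<in> (parent_edges n p)\<^sup>+"
    using trancl_into_trancl2[OF edges(1) r_into_trancl[OF edges(2)]] .
  then have "a \<noteq> b" "a \<noteq> v" "b \<noteq> v"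
    using chain rooted_forest_trancl_neq[OF assms(1)] unfolding strict_anc_def by blast+
  have pattern_instance: "has_instance n p [x, y, z]"
    if "a < b \<longleftrightarrow> x < y" "b < a \<longleftrightarrow> y < x" "a < v \<longleftrightarrow> x < z"
      "v < a \<longleftrightarrow> z < x" "b < v \<longleftrightarrow> y < z" "v < b \<longleftrightarrow> z < y" for x y z :: nat
    by (rule chain_has_instance_3[OF _ chain that]) (use v \<open>a \<in> {1..n}\<close> \<open>b \<in> {1..n}\<close> in auto)
  show "p v < v"
  proof (rule ccontr)
    assume "\<not> p v < v"
    then have "v < b"
      using \<open>b \<noteq> v\<close> by (simp add: b_def)
    then have "\<exists>pat\<in>pats_132_231_321. has_instance n p pat"
      using \<open>a \<noteq> b\<close> \<open>a \<noteq> v\<close> linorder_less_linear[of a v] linorder_less_linear[of a b]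
      by (elim disjE)
        (use pattern_instance[of 1 3 2] pattern_instance[of 2 3 1] pattern_instance[of 3 2 1] in auto)
    then show False
      using assms(2) by (auto simp: avoids_def)
  qed
qed

lemma avoids_iff_increasing_below_roots:
  "rooted_forest n p \<Longrightarrow> avoids n p pats_132_231_321 \<longleftrightarrow> increasing_below_roots n p"
  using avoids_imp_increasing_below_roots increasing_below_roots_imp_avoids by blast

section \<open>Counting forests with a given set of roots\<close>

definition parent_choices :: "nat \<Rightarrow> nat set \<Rightarrow> nat \<Rightarrow> nat set" where
  "parent_choices n R v = (if v \<in> R then {0} else R \<union> {u \<in> {1..n} - R. u < v})"

lemma rooted_forest_if_parent_root_or_less:
  assumes "\<forall>v. v \<notin> {1..n} \<longrightarrow> p v = 0" "\<forall>v\<in>R. p v = 0"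
    "\<forall>v\<in>{1..n} - R. p v \<in> {1..n} \<and> (p v \<in> R \<or> p v < v)"
  shows "rooted_forest n p"
proof -
  have "(parent_edges n p)\<inverse> \<subseteq> measure (\<lambda>v. if v \<in> R then 0 else Suc v)"
  proof
    fix e assume "e \<in> (parent_edges n p)\<inverse>"
    then obtain v where "e = (p v, v)" "v \<in> {1..n}" "p v \<noteq> 0"
      by (auto simp: parent_edges_iff)
    then show "e \<in> measure (\<lambda>v. if v \<in> R then 0 else Suc v)"
      using assms(2,3) by auto
  qed
  then have "acyclic (parent_edges n p)"
    by (metis acyclic_converse wf_acyclic wf_measure wf_subset)
  moreover have "p v \<le> n" if "v \<in> {1..n}" for v
    using assms(2,3) that by (cases "v \<in> R") auto
  ultimately show ?thesis
    using assms(1) by (simp add: rooted_forest_def acyclic_def)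
qed

lemma mem_parent_choices_iff:
  assumes "R \<subseteq> {1..n}"
  shows "u \<in> parent_choices n R v \<longleftrightarrow> (if v \<in> R then u = 0 else u \<in> {1..n} \<and> (u \<in> R \<or> u < v))"
  using assms by (auto simp: parent_choices_def)

lemma parent_choices_iff:
  assumes "R \<subseteq> {1..n}"
  shows "(\<forall>v\<in>{1..n}. p v \<in> parent_choices n R v) \<longleftrightarrow>
    (\<forall>v\<in>R. p v = 0) \<and> (\<forall>v\<in>{1..n} - R. p v \<in> {1..n} \<and> (p v \<in> R \<or> p v < v))"
  using assms by (auto simp: mem_parent_choices_iff)

lemma forest_with_roots_iff_parent_choices:
  assumes "R \<subseteq> {1..n}"
  shows "rooted_forest n p \<and> increasing_below_roots n p \<and> roots n p = R \<longleftrightarrow>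
    (\<forall>v\<in>{1..n}. p v \<in> parent_choices n R v) \<and> (\<forall>v. v \<notin> {1..n} \<longrightarrow> p v = 0)"
proof
  assume forest: "rooted_forest n p \<and> increasing_below_roots n p \<and> roots n p = R"
  have "\<forall>v\<in>R. p v = 0"
    using forest unfolding roots_def by blast
  moreover have "p v \<in> {1..n} \<and> (p v \<in> R \<or> p v < v)" if v: "v \<in> {1..n} - R" for v
  proof -
    have "p v \<in> {1..n}"
      using forest v rooted_forest_parent_in unfolding roots_def by blast
    moreover have "p (p v) \<noteq> 0" if "p v \<notin> R"
      using forest that \<open>p v \<in> {1..n}\<close> unfolding roots_def by auto
    moreover have "p v \<noteq> 0"
      using \<open>p v \<in> {1..n}\<close> by simp
    ultimately show ?thesis
      using forest v unfolding increasing_below_roots_def by blast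
  qed
  moreover have "\<forall>v. v \<notin> {1..n} \<longrightarrow> p v = 0"
    using forest unfolding rooted_forest_def by blast
  ultimately show "(\<forall>v\<in>{1..n}. p v \<in> parent_choices n R v) \<and> (\<forall>v. v \<notin> {1..n} \<longrightarrow> p v = 0)"
    using parent_choices_iff[OF assms] by blast
next
  assume choices: "(\<forall>v\<in>{1..n}. p v \<in> parent_choices n R v) \<and> (\<forall>v. v \<notin> {1..n} \<longrightarrow> p v = 0)"
  then have root: "\<forall>v\<in>R. p v = 0"
    and nonroot: "\<forall>v\<in>{1..n} - R. p v \<in> {1..n} \<and> (p v \<in> R \<or> p v < v)"
    using parent_choices_iff[OF assms] by blast+
  have "rooted_forest n p"
    using choices root nonroot by (intro rooted_forest_if_parent_root_or_less) blast+
  moreover have "roots n p = R"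
  proof -
    have "v \<in> R" if "v \<in> {1..n}" "p v = 0" for v
      using bspec[OF nonroot, of v] that by (cases "v \<in> R") auto
    then show ?thesis
      using root assms unfolding roots_def by auto
  qed
  moreover have "increasing_below_roots n p"
    unfolding increasing_below_roots_def
  proof (intro ballI impI)
    fix v assume "v \<in> {1..n}" "p v \<noteq> 0 \<and> p (p v) \<noteq> 0"
    then have "v \<in> {1..n} - R" "p v \<notin> R"
      using root by auto
    then show "p v < v"
      using bspec[OF nonroot] by blast
  qed
  ultimately show "rooted_forest n p \<and> increasing_below_roots n p \<and> roots n p = R"
    by blast
qed

lemma bij_betw_restrict_funs_with_default:
  "bij_betw (\<lambda>f. restrict f I) {f. (\<forall>i\<in>I. f i \<in> B i) \<and> (\<forall>i. i \<notin> I \<longrightarrow> f i = d)} (Pi\<^sub>E I B)"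
  by (rule bij_betw_byWitness[where f' = "\<lambda>g i. if i \<in> I then g i else d"])
    (auto simp: fun_eq_iff PiE_def extensional_def)

lemma prod_card_less_eq_pochhammer:
  fixes N :: "'b :: linorder set" and x :: "'a :: comm_semiring_1"
  assumes "finite N"
  shows "(\<Prod>v\<in>N. x + of_nat (card {u \<in> N. u < v})) = pochhammer x (card N)"
  using assms
proof (induction N rule: finite_linorder_max_induct)
  case (insert b N)
  have "b \<notin> N"
    using insert.hyps(2) by blast
  have "(\<Prod>v\<in>insert b N. x + of_nat (card {u \<in> insert b N. u < v}))
      = (x + of_nat (card N)) * (\<Prod>v\<in>N. x + of_nat (card {u \<in> N. u < v}))"
  proof -
    have "{u \<in> insert b N. u < b} = N"
      using insert.hyps by auto
    moreover have "{u \<in> insert b N. u < v} = {u \<in> N. u < v}" if "v \<in> N" for v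
      using insert.hyps that by auto
    ultimately show ?thesis
      using insert.hyps(1) \<open>b \<notin> N\<close> by (simp cong: prod.cong del: insert_iff)
  qed
  moreover have "card (insert b N) = Suc (card N)"
    using insert.hyps(1) \<open>b \<notin> N\<close> by simp
  ultimately show ?case
    using insert.IH by (simp add: pochhammer_Suc mult.commute)
qed simp

lemma card_avoiding_forests_with_roots:
  assumes "R \<subseteq> {1..n}"
  shows "card {p. rooted_forest n p \<and> avoids n p pats_132_231_321 \<and> roots n p = R}
      = pochhammer (card R) (n - card R)"
    and "finite {p. rooted_forest n p \<and> avoids n p pats_132_231_321 \<and> roots n p = R}"
proof -
  let ?F = "{p. rooted_forest n p \<and> avoids n p pats_132_231_321 \<and> roots n p = R}"
  have finite_R: "finite R"
    using assms finite_subset by blast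
  have forests: "?F = {p. (\<forall>v\<in>{1..n}. p v \<in> parent_choices n R v) \<and> (\<forall>v. v \<notin> {1..n} \<longrightarrow> p v = 0)}"
  proof (rule Collect_cong)
    fix p
    show "rooted_forest n p \<and> avoids n p pats_132_231_321 \<and> roots n p = R \<longleftrightarrow>
        (\<forall>v\<in>{1..n}. p v \<in> parent_choices n R v) \<and> (\<forall>v. v \<notin> {1..n} \<longrightarrow> p v = 0)"
      using forest_with_roots_iff_parent_choices[OF assms, of p]
        avoids_iff_increasing_below_roots[of n p]
      by blast
  qed
  have bij: "bij_betw (\<lambda>f. restrict f {1..n}) ?F (Pi\<^sub>E {1..n} (parent_choices n R))"
    unfolding forests by (rule bij_betw_restrict_funs_with_default)
  show "finite ?F"
    using bij_betw_finite[OF bij] finite_R by (auto simp: parent_choices_def intro!: finite_PiE)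
  have "card ?F = (\<Prod>v\<in>{1..n}. card (parent_choices n R v))"
    using bij_betw_same_card[OF bij] by (simp add: card_PiE)
  also have "\<dots> = (\<Prod>v\<in>{1..n} - R. card R + card {u \<in> {1..n} - R. u < v})"
  proof (rule prod.mono_neutral_cong_right)
    fix v assume "v \<in> {1..n} - R"
    then show "card (parent_choices n R v) = card R + card {u \<in> {1..n} - R. u < v}"
      using finite_R by (simp add: parent_choices_def card_Un_disjoint disjoint_iff)
  qed (auto simp: parent_choices_def)
  also have "\<dots> = pochhammer (card R) (card ({1..n} - R))"
    using prod_card_less_eq_pochhammer[of "{1..n} - R" "card R"] by simp
  also have "card ({1..n} - R) = n - card R"
    using assms finite_R by (simp add: card_Diff_subset)
  finally show "card ?F = pochhammer (card R) (n - card R)" .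
qed

lemma card_avoiding_forests_roots_in:
  assumes "Q \<subseteq> Pow {1..n}"
  shows "card {p. rooted_forest n p \<and> avoids n p pats_132_231_321 \<and> roots n p \<in> Q}
      = (\<Sum>R\<in>Q. pochhammer (card R) (n - card R))"
proof -
  have "finite Q"
    using assms by (rule finite_subset) simp
  have "card {p. rooted_forest n p \<and> avoids n p pats_132_231_321 \<and> roots n p \<in> Q}
      = card (\<Union>R\<in>Q. {p. rooted_forest n p \<and> avoids n p pats_132_231_321 \<and> roots n p = R})"
    by (rule arg_cong[where f = card]) blast
  also have "\<dots> = (\<Sum>R\<in>Q. card {p. rooted_forest n p \<and> avoids n p pats_132_231_321 \<and> roots n p = R})"
    using \<open>finite Q\<close> assms card_avoiding_forests_with_roots(2) by (intro card_UN_disjoint) auto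
  also have "\<dots> = (\<Sum>R\<in>Q. pochhammer (card R) (n - card R))"
    using assms card_avoiding_forests_with_roots(1) by (intro sum.cong) auto
  finally show ?thesis .
qed

lemma sum_Pow_card:
  fixes g :: "nat \<Rightarrow> 'a :: semiring_1"
  assumes "finite A"
  shows "(\<Sum>R\<in>Pow A. g (card R)) = (\<Sum>k\<le>card A. of_nat (card A choose k) * g k)"
proof -
  have "(\<Sum>R\<in>Pow A. g (card R)) = (\<Sum>k\<le>card A. \<Sum>R\<in>{R. R \<in> Pow A \<and> card R = k}. g (card R))"
    using assms by (intro sum.group[symmetric]) (auto simp: card_mono)
  also have "\<dots> = (\<Sum>k\<le>card A. of_nat (card A choose k) * g k)"
    using assms by (intro sum.cong) (simp_all add: n_subsets)
  finally show ?thesis .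
qed

lemma num_forests_pats_132_231_321:
  "num_forests pats_132_231_321 n = (\<Sum>k\<le>n. (n choose k) * pochhammer k (n - k))"
proof -
  have "roots n p \<in> Pow {1..n}" for p
    unfolding roots_def by blast
  then have "num_forests pats_132_231_321 n
      = card {p. rooted_forest n p \<and> avoids n p pats_132_231_321 \<and> roots n p \<in> Pow {1..n}}"
    by (simp add: num_forests_def)
  also have "\<dots> = (\<Sum>R\<in>Pow {1..n}. pochhammer (card R) (n - card R))"
    by (rule card_avoiding_forests_roots_in) (rule order_refl)
  also have "\<dots> = (\<Sum>k\<le>n. (n choose k) * pochhammer k (n - k))"
    using sum_Pow_card[of "{1..n}" "\<lambda>k. pochhammer k (n - k)"]
    by (simp only: finite_atLeastAtMost card_atLeastAtMost diff_Suc_1 of_nat_id simp_thms)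
  finally show ?thesis .
qed

lemma num_trees_pats_132_231_321:
  "num_trees pats_132_231_321 n = (if n = 0 then 0 else fact n)"
proof -
  have "roots n p \<subseteq> {1..n}" for p
    unfolding roots_def by blast
  then have "num_trees pats_132_231_321 n = card {p. rooted_forest n p \<and>
      avoids n p pats_132_231_321 \<and> roots n p \<in> {R. R \<subseteq> {1..n} \<and> card R = 1}}"
    by (simp add: num_trees_def rooted_tree_def conj_ac)
  also have "\<dots> = (\<Sum>R | R \<subseteq> {1..n} \<and> card R = 1. pochhammer 1 (n - 1))"
    by (subst card_avoiding_forests_roots_in) auto
  also have "\<dots> = n * fact (n - 1)"
    using n_subsets[of "{1..n}" 1] by (simp add: pochhammer_fact)
  also have "\<dots> = (if n = 0 then 0 else fact n)"
    by (cases n) auto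
  finally show ?thesis .
qed

section \<open>Exponential generating functions\<close>

unbundle fps_syntax

lemma sum_pochhammer_div_fact:
  fixes k :: "'a :: field_char_0"
  shows "(\<Sum>j\<le>m. pochhammer k j / fact j) = pochhammer (k + 1) m / fact m"
proof -
  have "(\<Sum>j\<le>m. pochhammer k j / fact j) = (\<Sum>j\<le>m. (k - 1 + of_nat j) gchoose j)"
    by (simp add: gbinomial_pochhammer')
  also have "\<dots> = pochhammer (k + 1) m / fact m"
    by (simp only: gbinomial_parallel_sum) (simp add: gbinomial_pochhammer' algebra_simps)
  finally show ?thesis .
qed

lemma inverse_one_minus_fps_X_power_nth:
  "(inverse (1 - fps_X :: 'a :: field_char_0 fps) ^ k) $ m = pochhammer (of_nat k) m / fact m"
proof (induction k arbitrary: m)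
  case 0
  then show ?case by (simp add: pochhammer_0_left)
next
  case (Suc k)
  have geom: "inverse (1 - fps_X :: 'a fps) = Abs_fps (\<lambda>_. 1)"
    using fps_inverse_gp'[where 'a='a] fps_inverse_idempotent[of "Abs_fps (\<lambda>_. 1 :: 'a)"] by simp
  have "(inverse (1 - fps_X) ^ Suc k) $ m = (\<Sum>j=0..m. (inverse (1 - fps_X :: 'a fps) ^ k) $ j)"
    by (simp add: power_Suc2 geom fps_mult_nth del: power_Suc)
  also have "\<dots> = pochhammer (of_nat (Suc k)) m / fact m"
    using sum_pochhammer_div_fact[of "of_nat k :: 'a" m] by (simp add: Suc atMost_atLeast0 add.commute)
  finally show ?case .
qed

lemma fps_X_div_one_minus_fps_X_power_nth:
  "((fps_X / (1 - fps_X) :: 'a :: field_char_0 fps) ^ k) $ n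
     = (if n < k then 0 else pochhammer (of_nat k) (n - k) / fact (n - k))"
  by (simp add: fps_divide_unit power_mult_distrib fps_X_power_mult_nth
      inverse_one_minus_fps_X_power_nth)

lemma fps_X_div_one_minus_fps_X:
  "fps_X / (1 - fps_X) = Abs_fps (\<lambda>n. if n = 0 then 0 else 1 :: 'a :: field_char_0)"
  using fps_X_div_one_minus_fps_X_power_nth[where k = 1 and 'a = 'a]
  by (simp add: fps_eq_iff pochhammer_fact[symmetric])

lemma fps_exp_compose_fps_X_div_one_minus_fps_X:
  "fps_exp 1 oo (fps_X / (1 - fps_X))
     = Abs_fps (\<lambda>n. (\<Sum>k\<le>n. of_nat (n choose k) * pochhammer (of_nat k) (n - k)) / fact n
         :: 'a :: field_char_0)"
proof (rule fps_ext)
  fix n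
  have "(fps_exp 1 oo (fps_X / (1 - fps_X))) $ n
      = (\<Sum>k\<le>n. pochhammer (of_nat k) (n - k) / (fact k * fact (n - k)) :: 'a)"
    by (simp add: fps_compose_nth fps_X_div_one_minus_fps_X_power_nth atMost_atLeast0)
  also have "\<dots> = (\<Sum>k\<le>n. of_nat (n choose k) * pochhammer (of_nat k) (n - k)) / fact n"
    by (simp add: sum_divide_distrib binomial_fact)
  finally show "(fps_exp 1 oo (fps_X / (1 - fps_X))) $ n
      = Abs_fps (\<lambda>n. (\<Sum>k\<le>n. of_nat (n choose k) * pochhammer (of_nat k) (n - k)) / fact n :: 'a) $ n"
    by simp
qed

section \<open>Growth of the number of forests\<close>

lemma power_div_fact_le_exp:
  fixes x :: real
  assumes "0 \<le> x"
  shows "x ^ k / fact k \<le> exp x"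
proof -
  have exp_sums: "(\<lambda>n. x ^ n / fact n) sums exp x"
    using exp_converges[of x] by (simp add: field_simps)
  have "(\<Sum>n\<in>{k}. x ^ n / fact n) \<le> (\<Sum>n. x ^ n / fact n)"
    using exp_sums assms by (intro sum_le_suminf) (auto simp: sums_iff)
  then show ?thesis
    using exp_sums by (simp add: sums_iff)
qed

lemma power_div_exp_le_fact: "(real n / exp 1) ^ n \<le> fact n"
proof -
  have "real n ^ n / fact n \<le> exp 1 ^ n"
    using power_div_fact_le_exp[of "real n" n] by (simp add: exp_of_nat_mult[symmetric])
  then show ?thesis
    by (simp add: power_divide field_simps)
qed

lemma exp_mult_power_le_Suc_power: "exp 1 * real n ^ Suc n \<le> real (Suc n) ^ Suc n"
proof -
  have "(real n / real (Suc n)) ^ Suc n \<le> exp (-1)"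
    using exp_ge_one_minus_x_over_n_power_n[of 1 "Suc n"] by (simp add: field_simps)
  then have "real n ^ Suc n / real (Suc n) ^ Suc n * exp 1 \<le> 1"
    by (simp add: power_divide exp_minus field_simps del: of_nat_Suc)
  then show ?thesis
    by (simp add: field_simps del: of_nat_Suc)
qed

lemma exp_power_mult_fact_le: "n \<ge> 1 \<Longrightarrow> exp 1 ^ n * fact n \<le> exp 1 * real n ^ Suc n"
proof (induction n rule: nat_induct_at_least)
  case (Suc n)
  have "exp 1 ^ Suc n * fact (Suc n) = exp 1 * real (Suc n) * (exp 1 ^ n * fact n)"
    by (simp add: algebra_simps)
  also have "\<dots> \<le> exp 1 * real (Suc n) * (exp 1 * real n ^ Suc n)"
    using Suc.IH by (intro mult_left_mono) auto
  also have "\<dots> \<le> exp 1 * real (Suc n) * real (Suc n) ^ Suc n"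
    using exp_mult_power_le_Suc_power by (intro mult_left_mono) auto
  finally show ?case
    by simp
qed simp

lemma fact_le_exp_mult_power_div_exp:
  assumes "n \<ge> 1"
  shows "fact n \<le> exp 1 * real n * (real n / exp 1) ^ n"
proof -
  have "fact n \<le> exp 1 * real n ^ Suc n / exp 1 ^ n"
    using exp_power_mult_fact_le[OF assms] by (simp add: pos_le_divide_eq mult.commute)
  also have "\<dots> = exp 1 * real n * (real n / exp 1) ^ n"
    by (simp add: power_divide)
  finally show ?thesis .
qed

lemma pochhammer_mult_fact_le_fact:
  assumes "k \<le> n"
  shows "pochhammer k (n - k) * fact k \<le> (fact n :: nat)"
proof -
  have "pochhammer k (n - k) \<le> pochhammer (Suc k) (n - k)"
    unfolding pochhammer_prod by (intro prod_mono) auto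
  moreover have "fact n = fact k * pochhammer (Suc k) (n - k)"
    using pochhammer_product[OF assms, of "1 :: nat"] by (simp add: pochhammer_fact)
  ultimately show ?thesis
    by (simp add: mult.commute)
qed

lemma power_div_fact_square_le_exp:
  "real n ^ k / (fact k * fact k) \<le> exp (2 * sqrt (real n))"
proof -
  have "real n ^ k / (fact k * fact k) = (sqrt (real n) ^ k / fact k) * (sqrt (real n) ^ k / fact k)"
    by (simp flip: power_mult_distrib)
  also have "\<dots> \<le> exp (sqrt (real n)) * exp (sqrt (real n))"
    by (intro mult_mono power_div_fact_le_exp) auto
  also have "\<dots> = exp (2 * sqrt (real n))"
    by (simp flip: exp_add)
  finally show ?thesis .
qed

lemma binomial_mult_pochhammer_le:
  assumes "k \<le> n"
  shows "real ((n choose k) * pochhammer k (n - k)) \<le> fact n * exp (2 * sqrt (real n))"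
proof -
  define x where "x = (n choose k) * pochhammer k (n - k)"
  have "x * (fact k * fact k) = ((n choose k) * fact k) * (pochhammer k (n - k) * fact k)"
    unfolding x_def by (simp only: mult_ac)
  also have "\<dots> \<le> n ^ k * fact n"
    using binomial_fact_pow pochhammer_mult_fact_le_fact[OF assms] by (rule mult_le_mono)
  finally have "real (x * (fact k * fact k)) \<le> real (n ^ k * fact n)"
    by (rule of_nat_mono)
  then have "real x * (fact k * fact k) \<le> fact n * real n ^ k"
    by (simp only: of_nat_mult of_nat_power of_nat_fact mult.commute)
  then have "real x \<le> fact n * (real n ^ k / (fact k * fact k))"
    by (simp add: pos_le_divide_eq)
  also have "\<dots> \<le> fact n * exp (2 * sqrt (real n))"
    by (intro mult_left_mono power_div_fact_square_le_exp) simp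
  finally show ?thesis
    unfolding x_def .
qed

lemma fact_le_num_forests_pats_132_231_321:
  assumes "n \<ge> 1"
  shows "fact n \<le> num_forests pats_132_231_321 n"
proof -
  have "(n choose 1) * pochhammer 1 (n - 1) \<le> num_forests pats_132_231_321 n"
    unfolding num_forests_pats_132_231_321 by (rule member_le_sum) (use assms in auto)
  moreover have "(n choose 1) * pochhammer 1 (n - 1) = fact n"
    using assms pochhammer_fact[of "n - 1", where 'a = nat] by (cases n) auto
  ultimately show ?thesis
    by simp
qed

lemma num_forests_pats_132_231_321_le:
  "real (num_forests pats_132_231_321 n) \<le> real (Suc n) * fact n * exp (2 * sqrt (real n))"
proof -
  have "real (num_forests pats_132_231_321 n)
      = (\<Sum>k\<le>n. real ((n choose k) * pochhammer k (n - k)))"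
    unfolding num_forests_pats_132_231_321 by simp
  also have "\<dots> \<le> (\<Sum>k\<le>n. fact n * exp (2 * sqrt (real n)))"
    by (intro sum_mono binomial_mult_pochhammer_le) simp
  finally show ?thesis
    by simp
qed

lemma root_div_tendsto_exp_minus_one:
  fixes f c :: "nat \<Rightarrow> real"
  assumes bounds: "\<forall>\<^sub>F n in sequentially.
      (real n / exp 1) ^ n \<le> f n \<and> f n \<le> c n * (real n / exp 1) ^ n"
    and c_root: "(\<lambda>n. c n powr (1 / real n)) \<longlonglongrightarrow> 1"
  shows "(\<lambda>n. root n (f n) / real n) \<longlonglongrightarrow> exp (-1)"
proof -
  have "\<forall>\<^sub>F n in sequentially. exp (-1) \<le> root n (f n) / real n \<and>
      root n (f n) / real n \<le> c n powr (1 / real n) * exp (-1)"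
    using eventually_ge_at_top[of 1] bounds
  proof eventually_elim
    case (elim n)
    then have "0 < n" "(real n / exp 1) ^ n \<le> f n" "f n \<le> c n * (real n / exp 1) ^ n"
      by auto
    have "0 < (real n / exp 1) ^ n"
      using \<open>0 < n\<close> by simp
    moreover have "0 \<le> c n * (real n / exp 1) ^ n"
      using calculation \<open>(real n / exp 1) ^ n \<le> f n\<close> \<open>f n \<le> c n * (real n / exp 1) ^ n\<close>
      by linarith
    ultimately have "0 \<le> c n"
      by (simp add: zero_le_mult_iff)
    have "real n / exp 1 = root n ((real n / exp 1) ^ n)"
      using \<open>0 < n\<close> by (simp add: real_root_power_cancel)
    also have "\<dots> \<le> root n (f n)"
      using \<open>0 < n\<close> \<open>(real n / exp 1) ^ n \<le> f n\<close> by (rule real_root_le_mono)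
    finally have lower: "real n / exp 1 \<le> root n (f n)" .
    have "root n (f n) \<le> root n (c n * (real n / exp 1) ^ n)"
      using \<open>0 < n\<close> \<open>f n \<le> c n * (real n / exp 1) ^ n\<close> by (rule real_root_le_mono)
    also have "\<dots> = root n (c n) * (real n / exp 1)"
      using \<open>0 < n\<close> by (simp add: real_root_mult real_root_power_cancel)
    also have "root n (c n) = c n powr (1 / real n)"
      using \<open>0 < n\<close> \<open>0 \<le> c n\<close> by (rule root_powr_inverse)
    finally have upper: "root n (f n) \<le> c n powr (1 / real n) * (real n / exp 1)" .
    show ?case
      using lower upper \<open>0 < n\<close> by (simp add: exp_minus field_simps)
  qed
  then have "\<forall>\<^sub>F n in sequentially. exp (-1) \<le> root n (f n) / real n"
    and "\<forall>\<^sub>F n in sequentially. root n (f n) / real n \<le> c n powr (1 / real n) * exp (-1)"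
    by (auto elim: eventually_mono)
  moreover from tendsto_mult_right[OF c_root, of "exp (-1)"]
  have "(\<lambda>n. c n powr (1 / real n) * exp (-1)) \<longlonglongrightarrow> exp (-1)"
    by simp
  ultimately show ?thesis
    by (rule tendsto_sandwich[OF _ _ tendsto_const])
qed

lemma root_num_forests_pats_132_231_321_div_tendsto:
  "(\<lambda>n. root n (real (num_forests pats_132_231_321 n)) / real n) \<longlonglongrightarrow> exp (-1)"
proof (rule root_div_tendsto_exp_minus_one)
  define c where "c n = exp 1 * real n * real (Suc n) * exp (2 * sqrt (real n))" for n
  show "(\<lambda>n. c n powr (1 / real n)) \<longlonglongrightarrow> 1"
    unfolding c_def by real_asymp
  have "(real n / exp 1) ^ n \<le> real (num_forests pats_132_231_321 n) \<and>
      real (num_forests pats_132_231_321 n) \<le> c n * (real n / exp 1) ^ n" if "n \<ge> 1" for n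
  proof (intro conjI)
    show "(real n / exp 1) ^ n \<le> real (num_forests pats_132_231_321 n)"
      using power_div_exp_le_fact[of n] of_nat_mono[OF fact_le_num_forests_pats_132_231_321[OF that]]
      unfolding of_nat_fact by (rule order_trans)
    have "real (num_forests pats_132_231_321 n) \<le> real (Suc n) * fact n * exp (2 * sqrt (real n))"
      by (rule num_forests_pats_132_231_321_le)
    also have "\<dots> \<le> real (Suc n) * (exp 1 * real n * (real n / exp 1) ^ n) * exp (2 * sqrt (real n))"
      using fact_le_exp_mult_power_div_exp[OF that] by (intro mult_right_mono mult_left_mono) auto
    also have "\<dots> = c n * (real n / exp 1) ^ n"
      unfolding c_def by (simp only: mult_ac)
    finally show "real (num_forests pats_132_231_321 n) \<le> c n * (real n / exp 1) ^ n" .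
  qed
  then show "\<forall>\<^sub>F n in sequentially. (real n / exp 1) ^ n \<le> real (num_forests pats_132_231_321 n) \<and>
      real (num_forests pats_132_231_321 n) \<le> c n * (real n / exp 1) ^ n"
    by (rule eventually_sequentiallyI)
qed

theorem proposition5p14:
  defines "S \<equiv> {[1,3,2], [2,3,1], [3,2,1]} :: nat list set"
  shows "(\<forall>n\<ge>1. num_trees S n = fact n)
    \<and> Abs_fps (\<lambda>n. real (num_trees S n) / fact n) = fps_X / (1 - fps_X)
    \<and> Abs_fps (\<lambda>n. real (num_forests S n) / fact n)
        = fps_compose (fps_exp 1) (fps_X / (1 - fps_X))
    \<and> (\<lambda>n. root n (real (num_forests S n)) / real n) \<longlonglongrightarrow> exp (-1)"
proof -
  have trees: "num_trees S n = (if n = 0 then 0 else fact n)" for n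
    unfolding S_def by (rule num_trees_pats_132_231_321)
  have forests: "num_forests S n = (\<Sum>k\<le>n. (n choose k) * pochhammer k (n - k))" for n
    unfolding S_def by (rule num_forests_pats_132_231_321)
  have "Abs_fps (\<lambda>n. real (num_trees S n) / fact n) = fps_X / (1 - fps_X)"
    by (simp add: trees fps_X_div_one_minus_fps_X fps_eq_iff)
  moreover have "Abs_fps (\<lambda>n. real (num_forests S n) / fact n)
      = fps_compose (fps_exp 1) (fps_X / (1 - fps_X))"
    by (simp add: forests fps_exp_compose_fps_X_div_one_minus_fps_X pochhammer_of_nat)
  moreover have "(\<lambda>n. root n (real (num_forests S n)) / real n) \<longlonglongrightarrow> exp (-1)"
    unfolding S_def by (rule root_num_forests_pats_132_231_321_div_tendsto)
  ultimately show ?thesis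
    using trees by simp
qed

end
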